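(* Let $d\ge 3$ be an integer, $p\in(0,1]$, and $\delta\in(0,1)$ with $\delta dp\ge 2\log^2 d$. Consider any realisation of $Q^d_p$ and the pruning process defined in the context. Let $t\in[2,\tau]\cap\mathbb{N}$. If $v\in A_t$, then there is a set $X$ of at least $\left(\frac{\delta dp}{2t\log d}\right)^{t-1}$ vertices, each at distance exactly $t-1$ from $v$ in $Q^d$, such that for all $x\in X$, $d_{Q^d_p}(x)\notin[(1-\delta_1)dp,(1+\delta_1)dp]$ (indeed $X\subseteq A_1$).
   Context: $Q^d$ is the $d$-dimensional hypercube (vertex set $\{0,1\}^d$, adjacency = Hamming distance one), and $Q^d_p$ is obtained by retaining each edge of $Q^d$ independently with probability $p$. For a graph $F$ and $S\subseteq V(F)$, $F[S]$ is the induced subgraph. Pruning process: let $\tau=\lfloor\log d\rfloor$ (natural log) and $\delta_t=\frac{t\delta}{\lfloor\log d\rfloor}$ for $t\in\mathbb{N}$. Let $H_1=Q^d_p$ and $A_1=\{v\in V(Q^d): d_{H_1}(v)\notin[(1-\delta_1)dp,(1+\delta_1)dp]\}$. For $t=2,\dots,\tau$, let $H_t=Q^d_p\left[V(Q^d)\setminus\bigcup_{i=1}^{t-1}A_i\right]$ and $A_t=\{v\in V(H_t): d_{H_t}(v)<(1-\delta_t)dp\}$. Finally $H=H_\tau$ and $A=\bigcup_{t=1}^\tau A_t$. Distances are in $Q^d$; $N^k(v)$ is the set of vertices at distance exactly $k$ from $v$ in $Q^d$. *)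

theory Defs
  imports Complex_Main
begin

text \<open>Vertices of Q^d: subsets of {0..<d} (identified with 0/1-vectors of length d).\<close>
definition cube_verts :: "nat \<Rightarrow> nat set set" where
  "cube_verts d = Pow {..<d}"

text \<open>Hamming distance = graph distance in Q^d.\<close>
definition hdist :: "nat set \<Rightarrow> nat set \<Rightarrow> nat" where
  "hdist u v = card ((u - v) \<union> (v - u))"

definition cube_edges :: "nat \<Rightarrow> nat set set set" where
  "cube_edges d = {{u, v} | u v. u \<in> cube_verts d \<and> v \<in> cube_verts d \<and> hdist u v = 1}"

definition sphere :: "nat \<Rightarrow> nat \<Rightarrow> nat set \<Rightarrow> nat set set" where
  "sphere d k v = {x \<in> cube_verts d. hdist v x = k}"

definition deg_in :: "nat set set set \<Rightarrow> nat set set \<Rightarrow> nat set \<Rightarrow> nat" where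
  "deg_in E R v = card {w \<in> R. {v, w} \<in> E}"

definition tau :: "nat \<Rightarrow> nat" where
  "tau d = nat \<lfloor>ln (real d)\<rfloor>"

definition delta_t :: "nat \<Rightarrow> real \<Rightarrow> nat \<Rightarrow> real" where
  "delta_t d \<delta> t = real t * \<delta> / real (tau d)"

text \<open>One pruning step: the set A_t, given the current remaining vertex set R
  (R is V(Q^d) for t = 1).\<close>
definition prune_step ::
  "nat \<Rightarrow> real \<Rightarrow> real \<Rightarrow> nat set set set \<Rightarrow> nat \<Rightarrow> nat set set \<Rightarrow> nat set set" where
  "prune_step d p \<delta> E t R =
     (if t = 1 then
        {v \<in> R. real (deg_in E R v) \<notin> {(1 - delta_t d \<delta> 1) * d * p .. (1 + delta_t d \<delta> 1) * d * p}}
      else {v \<in> R. real (deg_in E R v) < (1 - delta_t d \<delta> t) * d * p})"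

primrec removed :: "nat \<Rightarrow> real \<Rightarrow> real \<Rightarrow> nat set set set \<Rightarrow> nat \<Rightarrow> nat set set" where
  "removed d p \<delta> E 0 = {}"
| "removed d p \<delta> E (Suc t) =
     removed d p \<delta> E t \<union> prune_step d p \<delta> E (Suc t) (cube_verts d - removed d p \<delta> E t)"

text \<open>A_t (for t \<ge> 1): H_t has vertex set V(Q^d) minus A_1 \<union> ... \<union> A_{t-1}.\<close>
definition pruneA :: "nat \<Rightarrow> real \<Rightarrow> real \<Rightarrow> nat set set set \<Rightarrow> nat \<Rightarrow> nat set set" where
  "pruneA d p \<delta> E t = prune_step d p \<delta> E t (cube_verts d - removed d p \<delta> E (t - 1))"

end

theory Submission imports Defs begin

text \<open>A vertex of \<open>A\<^sub>s\<^sub>+\<^sub>1\<close> lost more than \<open>(\<delta>\<^sub>s\<^sub>+\<^sub>1 - \<delta>\<^sub>s) d p = \<delta> d p / \<tau>\<close> of its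
  degree when \<open>A\<^sub>s\<close> was deleted, so it has that many neighbours in \<open>A\<^sub>s\<close>. Starting at \<open>v \<in> A\<^sub>t\<close>
  and descending \<open>A\<^sub>t, A\<^sub>t\<^sub>-\<^sub>1, \<dots>, A\<^sub>1\<close>, each step may flip any of more than \<open>\<delta> d p / \<tau> - t\<close>
  coordinates not flipped before. Every set of \<open>t - 1\<close> coordinates arises from at most
  \<open>(t - 1)!\<close> such orderings, which gives \<open>(\<delta> d p / \<tau> - t)\<^sup>t\<^sup>-\<^sup>1 / (t - 1)!\<close> vertices of \<open>A\<^sub>1\<close> at
  distance \<open>t - 1\<close> from \<open>v\<close>; the hypothesis \<open>\<delta> d p \<ge> 2 log\<^sup>2 d\<close> makes the loss of \<open>t\<close> harmless.\<close>

lemma sym_diff_insert: "i \<notin> S \<Longrightarrow> sym_diff u (insert i S) = sym_diff (sym_diff u {i}) S"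
  by auto

lemma sym_diff_sym_diff_cancel [simp]: "sym_diff u (sym_diff u S) = S"
  by auto

lemma hdist_sym_diff: "hdist u (sym_diff u S) = card S"
  by (simp add: hdist_def)

lemma sym_diff_in_sphere:
  assumes "u \<in> cube_verts d" "S \<subseteq> {..<d}" "card S = k"
  shows "sym_diff u S \<in> sphere d k u"
  using assms hdist_sym_diff[of u S] by (auto simp: sphere_def cube_verts_def)

lemma hdist_commute: "hdist u w = hdist w u"
  by (simp add: hdist_def Un_commute)

lemma cube_edge_sym_diff:
  assumes "{u, w} \<in> cube_edges d"
  shows "\<exists>i<d. w = sym_diff u {i}"
proof -
  obtain a b where "{u, w} = {a, b}" "a \<in> cube_verts d" "b \<in> cube_verts d" "hdist a b = 1"
    using assms unfolding cube_edges_def by blast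
  hence "u \<in> cube_verts d" "w \<in> cube_verts d" "hdist u w = 1"
    using hdist_commute[of a b] by (auto simp: doubleton_eq_iff)
  then obtain i where i: "sym_diff u w = {i}"
    using card_1_singletonE[of "sym_diff u w"] unfolding hdist_def by metis
  hence "i < d"
    using \<open>u \<in> cube_verts d\<close> \<open>w \<in> cube_verts d\<close> by (auto simp: cube_verts_def)
  moreover have "w = sym_diff u {i}"
    using i by blast
  ultimately show ?thesis
    by blast
qed

lemma sum_card_le_sum_card_insert:
  fixes Y :: "'a \<Rightarrow> 'a set set"
  assumes "finite I" "finite Z" "\<forall>S\<in>Z. finite S"
    and YZ: "\<And>i S. i \<in> I \<Longrightarrow> S \<in> Y i \<Longrightarrow> i \<notin> S \<and> insert i S \<in> Z"
  shows "(\<Sum>i\<in>I. card (Y i)) \<le> (\<Sum>S\<in>Z. card S)"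
proof -
  let ?g = "\<lambda>(i, S). (insert i S, i)"
  have "finite (Y i)" if "i \<in> I" for i
  proof (rule finite_imageD)
    show "finite (insert i ` Y i)"
      using YZ[OF that] \<open>finite Z\<close> by (auto intro: finite_subset)
    show "inj_on (insert i) (Y i)"
      using YZ[OF that] by (intro inj_onI) (metis Diff_insert_absorb)
  qed
  hence "(\<Sum>i\<in>I. card (Y i)) = card (Sigma I Y)"
    using \<open>finite I\<close> by simp
  also have "\<dots> \<le> card (Sigma Z (\<lambda>S. S))"
  proof (rule card_inj_on_le)
    show "inj_on ?g (Sigma I Y)"
    proof (rule inj_onI, clarsimp)
      fix i S T assume "i \<in> I" "S \<in> Y i" "T \<in> Y i" "insert i S = insert i T"
      thus "S = T" by (metis YZ Diff_insert_absorb)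
    qed
    show "?g ` Sigma I Y \<subseteq> Sigma Z (\<lambda>S. S)"
      using YZ by auto
    show "finite (Sigma Z (\<lambda>S. S))"
      using assms(2,3) by auto
  qed
  also have "\<dots> = (\<Sum>S\<in>Z. card S)"
    using assms(2,3) by simp
  finally show ?thesis .
qed

text \<open>The counting argument for descending chains of levels \<open>A n, \<dots>, A 0\<close> in which every vertex
  of level \<open>s + 1\<close> has at least \<open>c + m\<close> neighbours in level \<open>s\<close>; the forbidden coordinates \<open>F\<close>
  (those already flipped) never number more than \<open>m\<close>.\<close>

lemma card_flip_sets_ge:
  fixes A :: "nat \<Rightarrow> nat set set" and c :: real
  assumes "0 \<le> c"
    and step: "\<And>s u. s < n \<Longrightarrow> u \<in> A (Suc s) \<Longrightarrow>
                 c + real m \<le> real (card {i\<in>{..<d}. sym_diff u {i} \<in> A s})"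
    and "u \<in> A n" "F \<subseteq> {..<d}" "card F + n \<le> m"
  shows "c ^ n / fact n \<le> real (card {S. S \<subseteq> {..<d} - F \<and> card S = n \<and> sym_diff u S \<in> A 0})"
  using assms(2-)
proof (induction n arbitrary: u F)
  case 0
  have "S = {}" if "S \<subseteq> {..<d} - F" "card S = 0" for S
    using that by (metis card_0_eq finite_Diff finite_lessThan finite_subset)
  hence "{S. S \<subseteq> {..<d} - F \<and> card S = 0 \<and> sym_diff u S \<in> A 0} = {{}}"
    using 0 by auto
  thus ?case by simp
next
  case (Suc n)
  define Z where "Z = {S. S \<subseteq> {..<d} - F \<and> card S = Suc n \<and> sym_diff u S \<in> A 0}"
  define Y where "Y i = {S. S \<subseteq> {..<d} - insert i F \<and> card S = n
                            \<and> sym_diff (sym_diff u {i}) S \<in> A 0}" for i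
  define I0 where "I0 = {i\<in>{..<d}. sym_diff u {i} \<in> A n}"
  define I where "I = I0 - F"
  have "finite F" "finite I"
    using Suc.prems(3) by (auto simp: I_def I0_def intro: finite_subset)
  have "card I0 \<le> card I + card F"
  proof -
    have "card I0 \<le> card (I \<union> F)"
      using \<open>finite F\<close> \<open>finite I\<close> by (intro card_mono) (auto simp: I_def)
    thus ?thesis
      using card_Un_le[of I F] by linarith
  qed
  moreover have "c + real m \<le> real (card I0)"
    unfolding I0_def using Suc.prems by (intro Suc.prems(1)) auto
  ultimately have card_I: "c \<le> real (card I)"
    using Suc.prems(4) by linarith
  have IH: "c ^ n / fact n \<le> real (card (Y i))" if "i \<in> I" for i
    unfolding Y_def using Suc.prems that \<open>finite F\<close>
    by (intro Suc.IH) (auto simp: I_def I0_def)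
  have "real (card I) * (c ^ n / fact n) = (\<Sum>i\<in>I. c ^ n / fact n)"
    by simp
  also have "\<dots> \<le> (\<Sum>i\<in>I. real (card (Y i)))"
    using IH by (rule sum_mono)
  also have "\<dots> \<le> real (\<Sum>S\<in>Z. card S)"
    unfolding of_nat_sum[symmetric] of_nat_le_iff
  proof (rule sum_card_le_sum_card_insert)
    show "finite Z" "\<forall>S\<in>Z. finite S"
      unfolding Z_def by (auto intro: finite_subset[of _ "Pow {..<d}"] finite_subset[of _ "{..<d}"])
    show "i \<notin> S \<and> insert i S \<in> Z" if "i \<in> I" "S \<in> Y i" for i S
    proof -
      have "finite S" "i \<notin> S"
        using that by (auto simp: Y_def intro: finite_subset[of _ "{..<d}"])
      moreover have "insert i S \<subseteq> {..<d} - F"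
        using that by (auto simp: Y_def I_def I0_def)
      moreover have "sym_diff u (insert i S) \<in> A 0"
        using that sym_diff_insert[OF \<open>i \<notin> S\<close>, of u] by (simp add: Y_def)
      moreover have "card S = n"
        using that by (simp add: Y_def)
      ultimately show ?thesis
        unfolding Z_def by simp
    qed
  qed fact
  also have "(\<Sum>S\<in>Z. card S) = Suc n * card Z"
    by (simp add: Z_def)
  finally have "real (card I) * (c ^ n / fact n) \<le> real (Suc n * card Z)" .
  moreover have "c * (c ^ n / fact n) \<le> real (card I) * (c ^ n / fact n)"
    using card_I \<open>0 \<le> c\<close> by (intro mult_right_mono) auto
  ultimately have "c * (c ^ n / fact n) \<le> real (Suc n * card Z)"
    by linarith
  have "c ^ Suc n / fact (Suc n) = c * (c ^ n / fact n) / real (Suc n)"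
    by simp
  also have "\<dots> \<le> real (card Z)"
    using \<open>c * (c ^ n / fact n) \<le> real (Suc n * card Z)\<close>
    by (subst pos_divide_le_eq) (simp_all only: of_nat_mult mult.commute of_nat_0_less_iff zero_less_Suc)
  finally show ?case
    unfolding Z_def .
qed

lemma fact_pow_le_div_pow:
  assumes "real n \<le> x" "0 \<le> a"
  shows "(a / x) ^ n \<le> a ^ n / fact n"
proof (cases "n = 0")
  case False
  have "fact n \<le> real (n ^ n)"
    by (metis fact_le_power)
  also have "\<dots> \<le> x ^ n"
    using assms(1) by (simp add: power_mono)
  finally show ?thesis
    using assms False by (simp add: power_divide divide_left_mono)
qed simp

lemma pruning_slack_ge:
  fixes D L T t :: real
  assumes "0 < T" "T \<le> L" "t \<le> T" "2 * L\<^sup>2 \<le> D"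
  shows "D / (2 * L) \<le> D / T - t"
proof -
  have "0 \<le> D"
    using assms(4) zero_le_power2[of L] by linarith
  have "D / L \<le> D / T"
    using assms \<open>0 \<le> D\<close> by (intro divide_left_mono) (auto simp: power2_eq_square)
  moreover have "2 * L \<le> D / L"
    using assms by (simp add: field_simps power2_eq_square)
  moreover have "D / (2 * L) = D / L / 2"
    by simp
  ultimately show ?thesis
    using assms(2,3) by linarith
qed

lemma pruning_count_bound:
  fixes D L T :: real and t :: nat
  assumes "0 < D" "0 < T" "T \<le> L" "real t \<le> T" "2 * L\<^sup>2 \<le> D"
  shows "0 \<le> D / T - t" "(D / (2 * t * L)) ^ (t - 1) \<le> (D / T - t) ^ (t - 1) / fact (t - 1)"
proof -
  have "D / (2 * L) \<le> D / T - t"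
    using assms(2-) by (rule pruning_slack_ge)
  moreover have "0 < D / (2 * L)"
    using assms(1-3) by simp
  ultimately show "0 \<le> D / T - t"
    by linarith
  have "(D / (2 * t * L)) ^ (t - 1) = (D / (2 * L) / t) ^ (t - 1)"
    by (simp add: mult_ac)
  also have "\<dots> \<le> ((D / T - t) / t) ^ (t - 1)"
    using \<open>D / (2 * L) \<le> D / T - t\<close> assms(1-3)
    by (intro power_mono divide_right_mono) auto
  also have "\<dots> \<le> (D / T - t) ^ (t - 1) / fact (t - 1)"
    using \<open>0 \<le> D / T - t\<close> by (intro fact_pow_le_div_pow) auto
  finally show "(D / (2 * t * L)) ^ (t - 1) \<le> (D / T - t) ^ (t - 1) / fact (t - 1)" .
qed

lemma deg_in_split:
  assumes "finite R" "A \<subseteq> R"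
  shows "deg_in E R u = deg_in E (R - A) u + deg_in E A u"
proof -
  have "{w \<in> R. {u, w} \<in> E} = {w \<in> R - A. {u, w} \<in> E} \<union> {w \<in> A. {u, w} \<in> E}"
    using assms(2) by auto
  moreover have "finite {w \<in> R - A. {u, w} \<in> E}" "finite {w \<in> A. {u, w} \<in> E}"
    using assms by (auto intro: finite_subset)
  ultimately show ?thesis
    unfolding deg_in_def by (simp add: card_Un_disjoint disjoint_iff)
qed

lemma removed_Suc: "removed d p \<delta> E (Suc k) = removed d p \<delta> E k \<union> pruneA d p \<delta> E (Suc k)"
  by (simp add: pruneA_def)

lemma pruneA_subset: "pruneA d p \<delta> E s \<subseteq> cube_verts d - removed d p \<delta> E (s - 1)"
  by (auto simp: pruneA_def prune_step_def)

lemma pruneA_one: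
  "pruneA d p \<delta> E 1 = {x \<in> cube_verts d. real (deg_in E (cube_verts d) x)
                           \<notin> {(1 - delta_t d \<delta> 1) * d * p .. (1 + delta_t d \<delta> 1) * d * p}}"
  by (simp add: pruneA_def prune_step_def)

lemma delta_t_Suc_diff: "delta_t d \<delta> (Suc s) - delta_t d \<delta> s = \<delta> / real (tau d)"
  by (simp add: delta_t_def field_simps add_divide_distrib)

text \<open>Deleting \<open>A\<^sub>s\<close> lowers the degree of \<open>u\<close> from at least \<open>(1 - \<delta>\<^sub>s) d p\<close> (in \<open>H\<^sub>s\<close>) to less than
  \<open>(1 - \<delta>\<^sub>s\<^sub>+\<^sub>1) d p\<close> (in \<open>H\<^sub>s\<^sub>+\<^sub>1\<close>); for \<open>s = 1\<close> the lower bound holds because \<open>u \<notin> A\<^sub>1\<close>.\<close>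

lemma deg_in_prev_pruneA_gt:
  assumes "1 \<le> s" and u: "u \<in> pruneA d p \<delta> E (Suc s)"
  shows "\<delta> / real (tau d) * d * p < real (deg_in E (pruneA d p \<delta> E s) u)"
proof -
  define R where "R = cube_verts d - removed d p \<delta> E (s - 1)"
  define A where "A = pruneA d p \<delta> E s"
  have "removed d p \<delta> E s = removed d p \<delta> E (s - 1) \<union> A"
    using removed_Suc[of d p \<delta> E "s - 1"] \<open>1 \<le> s\<close> by (simp add: A_def)
  hence R_next: "cube_verts d - removed d p \<delta> E s = R - A"
    unfolding R_def by blast
  have "A \<subseteq> R" "finite R"
    using pruneA_subset[of d p \<delta> E s] by (auto simp: A_def R_def cube_verts_def)
  have "u \<in> R - A"
    using pruneA_subset[of d p \<delta> E "Suc s"] u R_next by auto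
  have "real (deg_in E (R - A) u) < (1 - delta_t d \<delta> (Suc s)) * d * p"
    using u R_next \<open>1 \<le> s\<close> by (simp add: pruneA_def prune_step_def)
  moreover have "(1 - delta_t d \<delta> s) * d * p \<le> real (deg_in E R u)"
    using \<open>u \<in> R - A\<close> by (cases "s = 1") (auto simp: A_def R_def pruneA_def prune_step_def)
  moreover have "(1 - delta_t d \<delta> s) * d * p - (1 - delta_t d \<delta> (Suc s)) * d * p
                   = \<delta> / real (tau d) * d * p"
    using delta_t_Suc_diff[of d \<delta> s] by (simp add: algebra_simps)
  ultimately show ?thesis
    using deg_in_split[OF \<open>finite R\<close> \<open>A \<subseteq> R\<close>, of E u] unfolding A_def by linarith
qed

lemma card_flips_into_prev_pruneA:
  assumes "1 \<le> s" "u \<in> pruneA d p \<delta> E (Suc s)" "E \<subseteq> cube_edges d"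
  shows "\<delta> / real (tau d) * d * p < real (card {i\<in>{..<d}. sym_diff u {i} \<in> pruneA d p \<delta> E s})"
proof -
  let ?I = "{i\<in>{..<d}. sym_diff u {i} \<in> pruneA d p \<delta> E s}"
  have "{w \<in> pruneA d p \<delta> E s. {u, w} \<in> E} \<subseteq> (\<lambda>i. sym_diff u {i}) ` ?I"
    using cube_edge_sym_diff assms(3) by blast
  hence "deg_in E (pruneA d p \<delta> E s) u \<le> card ((\<lambda>i. sym_diff u {i}) ` ?I)"
    unfolding deg_in_def by (intro card_mono) auto
  also have "\<dots> \<le> card ?I"
    by (rule card_image_le) simp
  finally show ?thesis
    using deg_in_prev_pruneA_gt[OF assms(1,2)] by linarith
qed

theorem lemma2p3:
  fixes d t :: nat and p \<delta> :: real and E :: "nat set set set" and v :: "nat set"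
  assumes "d \<ge> 3"
    and "0 < p" "p \<le> 1"
    and "0 < \<delta>" "\<delta> < 1"
    and "\<delta> * d * p \<ge> 2 * (ln (real d))\<^sup>2"
    and "E \<subseteq> cube_edges d"
    and "2 \<le> t" "t \<le> tau d"
    and "v \<in> pruneA d p \<delta> E t"
  shows "\<exists>X. X \<subseteq> sphere d (t - 1) v
           \<and> real (card X) \<ge> (\<delta> * d * p / (2 * t * ln (real d))) ^ (t - 1)
           \<and> (\<forall>x\<in>X. real (deg_in E (cube_verts d) x)
                 \<notin> {(1 - delta_t d \<delta> 1) * d * p .. (1 + delta_t d \<delta> 1) * d * p})"
proof -
  define c where "c = \<delta> * d * p / real (tau d) - real t"
  have "0 < real (tau d)"
    using assms(8,9) by simp
  moreover have "real (tau d) \<le> ln (real d)"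
    using assms(1) by (simp add: tau_def)
  moreover have "0 < \<delta> * d * p"
    using assms(1,2,4) by simp
  ultimately have "0 \<le> c" and bound_le: "(\<delta> * d * p / (2 * t * ln (real d))) ^ (t - 1) \<le> c ^ (t - 1) / fact (t - 1)"
    unfolding c_def using assms(6,9) pruning_count_bound by auto
  define Y where "Y = {S. S \<subseteq> {..<d} \<and> card S = t - 1 \<and> sym_diff v S \<in> pruneA d p \<delta> E 1}"
  have "c ^ (t - 1) / fact (t - 1)
          \<le> real (card {S. S \<subseteq> {..<d} - {} \<and> card S = t - 1 \<and> sym_diff v S \<in> pruneA d p \<delta> E (Suc 0)})"
  proof (rule card_flip_sets_ge[where A = "\<lambda>s. pruneA d p \<delta> E (Suc s)" and m = t])
    show "c + real t \<le> real (card {i \<in> {..<d}. sym_diff u {i} \<in> pruneA d p \<delta> E (Suc s)})"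
      if "s < t - 1" "u \<in> pruneA d p \<delta> E (Suc (Suc s))" for s u
      using card_flips_into_prev_pruneA[of "Suc s", OF _ that(2) assms(7)] by (simp add: c_def)
    show "v \<in> pruneA d p \<delta> E (Suc (t - 1))"
      using assms(8,10) by (simp add: Suc_diff_Suc numeral_2_eq_2)
  qed (use \<open>0 \<le> c\<close> in simp_all)
  moreover have "card (sym_diff v ` Y) = card Y"
    by (intro card_image inj_onI) (metis sym_diff_sym_diff_cancel)
  ultimately have "(\<delta> * d * p / (2 * t * ln (real d))) ^ (t - 1) \<le> real (card (sym_diff v ` Y))"
    using bound_le by (simp add: Y_def)
  moreover have "sym_diff v ` Y \<subseteq> sphere d (t - 1) v"
    using pruneA_subset[of d p \<delta> E t] assms(10) by (auto simp: Y_def intro!: sym_diff_in_sphere)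
  moreover have "\<forall>x\<in>sym_diff v ` Y. real (deg_in E (cube_verts d) x)
                   \<notin> {(1 - delta_t d \<delta> 1) * d * p .. (1 + delta_t d \<delta> 1) * d * p}"
    using pruneA_one[of d p \<delta> E] by (auto simp: Y_def)
  ultimately show ?thesis
    by blast
qed

end
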